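(* Let $m \ge 1$ be an integer and let $c : [-1,1] \to \mathbb{R}$ be continuous with $c^{-1}(1) = \{-1, 0, 1\}$ and such that $\theta \mapsto \theta\, c(\theta)$ is strictly increasing on $[-1,1]$. Let $[a,b]$ be an angular interval with $0 < b - a < 2\pi$, split into $m$ equal consecutive subintervals $[a_{i-1}, a_i]$, $i = 1,\dots,m$ ($a_0 = a$, $a_m = b$), and let $\varphi_i : [a_{i-1}, a_i] \to [-1,1]$ be the increasing affine bijection. Define $F : \mathbb{R}^2 \to \mathbb{R}^2$ by $F(o) = o$ and, in the polar coordinates described below, $$F(\theta, r) = \big(\varphi_i^{-1}(\varphi_i(\theta)\, c(\varphi_i(\theta))),\; r + 1 - 2\varphi_i(\theta)^2\big) \quad\text{if } \theta \in [a_{i-1}, a_i],$$ and $F(\theta, r) = (\theta, r - 1)$ if $\theta \notin [a,b]$. Then $o$ is an isolated fixed point of every iterate $F^n$, and: (1) if $c([-1,1]) \subset [1/2, 1]$, then $i(F^n, o) = 1 - m$ for every $n \ge 1$; (2) if $c([-1,1]) \subset [1, 2]$, then $i(F^n, o) = 1 + m$ for every $n \ge 1$. In particular (case $m=1$) the corresponding maps have indices $i(F^n,o)=0$ for all $n$ in case (1) and $i(F^n,o)=2$ for all $n$ in case (2).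
   Context: Polar coordinates on $\mathbb{R}^2\setminus\{o\}$ ($o$ the origin): a point is written $(\theta, r)$ with $\theta \in (-\pi,\pi]$ an angle and $r \in \mathbb{R}$, corresponding to $e^{r}(\cos\theta, \sin\theta)$; thus the origin corresponds to $r = -\infty$. $i(g,o)$ denotes the fixed point index of $g$ at the isolated fixed point $o$ (degree of $x \mapsto (x-g(x))/\|x-g(x)\|$ on a small circle around $o$). *)

theory Defs
  imports "HOL-Analysis.Analysis"
begin

text \<open>The plane R^2 is modelled as the complex numbers; the origin o is 0.
  The point with polar coordinates (theta, r) is exp r * cis theta.\<close>

definition polar :: "real \<Rightarrow> real \<Rightarrow> complex" where
  "polar \<theta> r = complex_of_real (exp r) * cis \<theta>"

definition sub_pt :: "real \<Rightarrow> real \<Rightarrow> nat \<Rightarrow> nat \<Rightarrow> real" where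
  "sub_pt a b m i = a + real i * (b - a) / real m"

definition phi :: "real \<Rightarrow> real \<Rightarrow> nat \<Rightarrow> nat \<Rightarrow> real \<Rightarrow> real" where
  "phi a b m i t = 2 * (t - sub_pt a b m (i - 1)) / (sub_pt a b m i - sub_pt a b m (i - 1)) - 1"

definition phi_inv :: "real \<Rightarrow> real \<Rightarrow> nat \<Rightarrow> nat \<Rightarrow> real \<Rightarrow> real" where
  "phi_inv a b m i s = sub_pt a b m (i - 1) + (s + 1) * (sub_pt a b m i - sub_pt a b m (i - 1)) / 2"

text \<open>A nonzero point z lies in the angular interval [a,b] iff some representative
  Arg z + 2 pi k of its angle lies in [a,b] (unique since b - a < 2 pi).\<close>
definition ang_rep :: "real \<Rightarrow> real \<Rightarrow> complex \<Rightarrow> real" where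
  "ang_rep a b z = (THE t. t \<in> {a..b} \<and> (\<exists>k::int. t = Arg z + 2 * pi * of_int k))"

definition Fmap :: "nat \<Rightarrow> (real \<Rightarrow> real) \<Rightarrow> real \<Rightarrow> real \<Rightarrow> complex \<Rightarrow> complex" where
  "Fmap m c a b z =
    (if z = 0 then 0
     else if (\<exists>t\<in>{a..b}. \<exists>k::int. t = Arg z + 2 * pi * of_int k) then
       (let t = ang_rep a b z;
            i = (SOME i. i \<in> {1..m} \<and> t \<in> {sub_pt a b m (i - 1) .. sub_pt a b m i});
            s = phi a b m i t
        in polar (phi_inv a b m i (s * c s)) (ln (cmod z) + 1 - 2 * s\<^sup>2))
     else polar (Arg z) (ln (cmod z) - 1))"

definition isolated_fixpoint :: "(complex \<Rightarrow> complex) \<Rightarrow> complex \<Rightarrow> bool" where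
  "isolated_fixpoint g p \<longleftrightarrow> g p = p \<and>
     (\<exists>\<epsilon>>0. \<forall>x. 0 < dist x p \<and> dist x p < \<epsilon> \<longrightarrow> g x \<noteq> x)"

text \<open>Fixed point index: degree of x |-> (x - g x)/|x - g x| on small circles
  around p (counterclockwise), computed via a continuous lift of the angle.\<close>
definition fp_index :: "(complex \<Rightarrow> complex) \<Rightarrow> complex \<Rightarrow> int" where
  "fp_index g p = (THE d::int. \<exists>\<epsilon>>0. \<forall>\<rho>. 0 < \<rho> \<and> \<rho> < \<epsilon> \<longrightarrow>
      (\<exists>L. continuous_on {0..2*pi} L \<and>
           (\<forall>t\<in>{0..2*pi}. sgn (p + \<rho> * cis t - g (p + \<rho> * cis t)) = cis (L t)) \<and>
           L (2*pi) - L 0 = 2 * pi * of_int d))"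

end

theory Submission
  imports Defs
begin

text \<open>In polar coordinates F^n maps (t, r) to (G^n t, r + Dsum n t). Hence F^n commutes with
  dilations, and on every circle around o the displacement is x - F^n x = x * W n (arg x) with
  W n t = 1 - e^(Dsum n t) cis (G^n t - t); so i(F^n, o) is 1 plus the winding number of W n
  over one turn.

  Outside [a,b], W n is the positive constant 1 - e^-n. On the i-th subinterval write
  s = phi_i t, so that G^n t - t is a multiple of (h^n s - s) with h s = s c(s). Since h is an
  increasing self-map of [-1,1] with fixed points exactly -1, 0, 1, it has no other periodic
  points; W n is the positive number 1 - e^-n at the ends of the subinterval and the negative
  number 1 - e^n at its midpoint. On each half, h^n moves s towards 0 if c \<le> 1 and away from 0
  if c \<ge> 1, which decides the half plane W n stays in. So every subinterval contributes one full
  turn, -1 in the first case and +1 in the second.\<close>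

section \<open>Lifts of the argument\<close>

lemma cis_eq_cis_iff: "cis x = cis y \<longleftrightarrow> (\<exists>k::int. x = y + 2 * pi * of_int k)"
  using sin_cos_eq_iff[of x y] by (auto simp: complex_eq_iff)

lemma cis_add_2pi_int [simp]: "cis (x + 2 * pi * of_int k) = cis x"
  using cis_eq_cis_iff by blast

lemma sgn_of_real_times_cis: "r > 0 \<Longrightarrow> sgn (complex_of_real r * cis t) = cis t"
  by (simp add: sgn_mult sgn_of_real)

lemma continuous_lift_exists:
  fixes f :: "real \<Rightarrow> complex" and u v :: real
  assumes "continuous_on {u..v} f" "\<And>t. t \<in> {u..v} \<Longrightarrow> f t \<noteq> 0"
  obtains L where "continuous_on {u..v} L" "\<And>t. t \<in> {u..v} \<Longrightarrow> sgn (f t) = cis (L t)"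
proof -
  have "contractible {u..v}" by (simp add: convex_imp_contractible)
  then obtain g where g: "continuous_on {u..v} g" "\<And>t. t \<in> {u..v} \<Longrightarrow> f t = exp (g t)"
    using continuous_logarithm_on_contractible[OF assms(1)] assms(2) by metis
  show thesis
  proof
    show "continuous_on {u..v} (\<lambda>t. Im (g t))" by (intro continuous_intros g)
    show "sgn (f t) = cis (Im (g t))" if "t \<in> {u..v}" for t
      using g(2)[OF that] by (simp add: exp_eq_polar sgn_mult sgn_of_real)
  qed
qed

lemma continuous_cis_eq_1_imp_constant:
  fixes g :: "real \<Rightarrow> real"
  assumes "continuous_on {u..v} g" "u \<le> v" "\<And>t. t \<in> {u..v} \<Longrightarrow> cis (g t) = 1"
  shows "g v = g u"
proof -
  have "g constant_on {u..v}"
  proof (rule continuous_discrete_range_constant)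
    fix x assume x: "x \<in> {u..v}"
    show "\<exists>e>0. \<forall>y. y \<in> {u..v} \<and> g y \<noteq> g x \<longrightarrow> e \<le> norm (g y - g x)"
    proof (intro exI[of _ "2 * pi"] conjI allI impI)
      fix y assume y: "y \<in> {u..v} \<and> g y \<noteq> g x"
      have "cis (g y) = cis (g x)" using assms(3) x y by simp
      then obtain k :: int where k: "g y = g x + 2 * pi * k" using cis_eq_cis_iff by blast
      with y have "k \<noteq> 0" by auto
      then have "2 * pi * 1 \<le> 2 * pi * \<bar>real_of_int k\<bar>" by (intro mult_left_mono) auto
      then show "2 * pi \<le> norm (g y - g x)" using k by (simp add: abs_mult)
    qed simp
  qed (use assms in auto)
  then show ?thesis using assms(2) unfolding constant_on_def by force
qed

lemma lift_increment_unique: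
  fixes L1 L2 :: "real \<Rightarrow> real"
  assumes "continuous_on {u..v} L1" "continuous_on {u..v} L2" "u \<le> v"
    "\<And>t. t \<in> {u..v} \<Longrightarrow> cis (L1 t) = cis (L2 t)"
  shows "L1 v - L1 u = L2 v - L2 u"
proof -
  have "(\<lambda>t. L1 t - L2 t) v = (\<lambda>t. L1 t - L2 t) u"
    by (rule continuous_cis_eq_1_imp_constant)
       (use assms in \<open>auto intro!: continuous_intros simp: cis_divide[symmetric]\<close>)
  then show ?thesis by simp
qed

text \<open>Away from the ray where Arg (_ * cis gamma) jumps, Arg (f t * cis gamma) - gamma is a
  continuous lift.\<close>
lemma lift_increment_avoiding_ray:
  fixes f :: "real \<Rightarrow> complex" and u v :: real
  assumes f: "continuous_on {u..v} f" and "u \<le> v"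
    and L: "continuous_on {u..v} L" "\<And>t. t \<in> {u..v} \<Longrightarrow> sgn (f t) = cis (L t)"
    and ray: "\<And>t. t \<in> {u..v} \<Longrightarrow> f t * cis \<gamma> \<notin> \<real>\<^sub>\<le>\<^sub>0"
  shows "L v - L u = Arg (f v * cis \<gamma>) - Arg (f u * cis \<gamma>)"
proof -
  have "L v - L u = (Arg (f v * cis \<gamma>) - \<gamma>) - (Arg (f u * cis \<gamma>) - \<gamma>)"
  proof (rule lift_increment_unique[OF L(1) _ \<open>u \<le> v\<close>])
    show "continuous_on {u..v} (\<lambda>t. Arg (f t * cis \<gamma>) - \<gamma>)"
      by (intro continuous_intros f) (use ray in auto)
    fix t assume t: "t \<in> {u..v}"
    then have "f t \<noteq> 0" using ray by fastforce
    then show "cis (L t) = cis (Arg (f t * cis \<gamma>) - \<gamma>)"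
      using L(2)[OF t] by (simp add: cis_divide[symmetric] cis_Arg sgn_mult)
  qed
  then show ?thesis by simp
qed

lemma Arg_real_times_minus_ii:
  assumes "x \<in> \<real>" "x \<noteq> 0"
  shows "Arg (x * - \<i>) = Arg x - pi / 2"
proof -
  obtain r where r: "x = complex_of_real r" "r \<noteq> 0" using assms by (auto elim: Reals_cases)
  show ?thesis
  proof (cases "r > 0")
    case True then show ?thesis using r Arg_times_of_real[of r "- \<i>"] by simp
  next
    case False
    then have "x * - \<i> = complex_of_real (- r) * \<i>" using r by simp
    then show ?thesis using False r Arg_times_of_real[of "- r" "\<i>"] by simp
  qed
qed

lemma lift_increment_upper_half_plane:
  fixes f :: "real \<Rightarrow> complex" and u v :: real
  assumes "continuous_on {u..v} f" "u \<le> v"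
    and L: "continuous_on {u..v} L" "\<And>t. t \<in> {u..v} \<Longrightarrow> sgn (f t) = cis (L t)"
    and upper: "\<And>t. t \<in> {u..v} \<Longrightarrow> f t \<noteq> 0 \<and> Im (f t) \<ge> 0"
    and real: "f u \<in> \<real>" "f v \<in> \<real>"
  shows "L v - L u = Arg (f v) - Arg (f u)"
proof -
  have "L v - L u = Arg (f v * cis (- (pi / 2))) - Arg (f u * cis (- (pi / 2)))"
  proof (rule lift_increment_avoiding_ray[OF assms(1,2) L])
    fix t assume t: "t \<in> {u..v}"
    show "f t * cis (- (pi / 2)) \<notin> \<real>\<^sub>\<le>\<^sub>0"
      using upper[OF t] by (auto simp: complex_nonpos_Reals_iff complex_eq_iff)
  qed
  also have "\<dots> = Arg (f v) - Arg (f u)"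
    using Arg_real_times_minus_ii[OF real(1)] Arg_real_times_minus_ii[OF real(2)] upper \<open>u \<le> v\<close>
    by simp
  finally show ?thesis .
qed

lemma lift_increment_lower_half_plane:
  fixes f :: "real \<Rightarrow> complex" and u v :: real
  assumes "continuous_on {u..v} f" "u \<le> v"
    and L: "continuous_on {u..v} L" "\<And>t. t \<in> {u..v} \<Longrightarrow> sgn (f t) = cis (L t)"
    and lower: "\<And>t. t \<in> {u..v} \<Longrightarrow> f t \<noteq> 0 \<and> Im (f t) \<le> 0"
    and real: "f u \<in> \<real>" "f v \<in> \<real>"
  shows "L v - L u = Arg (f u) - Arg (f v)"
proof -
  have "(\<lambda>t. - L t) v - (\<lambda>t. - L t) u = Arg (cnj (f v)) - Arg (cnj (f u))"
  proof (rule lift_increment_upper_half_plane)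
    show "continuous_on {u..v} (\<lambda>t. cnj (f t))" "continuous_on {u..v} (\<lambda>t. - L t)"
      by (intro continuous_intros assms)+
    show "sgn (cnj (f t)) = cis (- L t)" if "t \<in> {u..v}" for t
      using L(2)[OF that] by (metis cis_cnj complex_cnj_divide complex_cnj_complex_of_real complex_mod_cnj sgn_eq)
  qed (use assms in \<open>auto simp: Reals_cnj_iff\<close>)
  then show ?thesis using real by (simp add: Reals_cnj_iff)
qed

lemma continuous_on_period_piecewiseic_extension:
  fixes f :: "real \<Rightarrow> 'a::topological_space"
  assumes cont: "continuous_on {u..u + p} f" and "p > 0"
    and periodic: "\<And>t (k::int). f (t + of_int k * p) = f t"
  shows "continuous_on UNIV f"
proof -
  have shifted: "continuous_on {u + of_int k * p..u + of_int k * p + p} f" for k :: int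
  proof -
    have "continuous_on {u + of_int k * p..u + of_int k * p + p} (\<lambda>t. f (t + of_int (- k) * p))"
      by (rule continuous_on_compose2[OF cont]) (auto intro!: continuous_intros simp: algebra_simps)
    then show ?thesis using periodic[of _ "- k"] by simp
  qed
  have "isCont f x" for x
  proof -
    define k where "k = \<lfloor>(x - u) / p\<rfloor>"
    have "of_int k \<le> (x - u) / p" "(x - u) / p < of_int k + 1"
      unfolding k_def by linarith+
    then have x: "u + of_int k * p \<le> x" "x < u + of_int k * p + p"
      using \<open>p > 0\<close> by (simp_all add: field_simps)
    let ?I = "{u + of_int (k - 1) * p..u + of_int k * p + p}"
    have I_eq: "?I = {u + of_int (k - 1) * p..u + of_int (k - 1) * p + p} \<union> {u + of_int k * p..u + of_int k * p + p}"
      using \<open>p > 0\<close> by (auto simp: algebra_simps)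
    have "continuous_on ?I f"
      unfolding I_eq by (rule continuous_on_closed_Un[OF _ _ shifted shifted]) auto
    moreover have "x \<in> interior ?I" using x \<open>p > 0\<close> by (simp add: algebra_simps)
    ultimately show ?thesis using continuous_on_interior by blast
  qed
  then show ?thesis by (simp add: continuous_on_eq_continuous_at)
qed

lemma lift_increment_periodic:
  fixes f :: "real \<Rightarrow> complex" and u v p :: real
  assumes cont: "continuous_on UNIV f" and nonzero: "\<And>t. f t \<noteq> 0"
    and periodic: "\<And>t. f (t + p) = f t" and "p > 0"
    and L: "continuous_on {u..u + p} L" "\<And>t. t \<in> {u..u + p} \<Longrightarrow> sgn (f t) = cis (L t)"
    and M: "continuous_on {v..v + p} M" "\<And>t. t \<in> {v..v + p} \<Longrightarrow> sgn (f t) = cis (M t)"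
  shows "L (u + p) - L u = M (v + p) - M v"
proof -
  define w w' where "w = min u v" and "w' = max u v"
  obtain K where K: "continuous_on {w..w' + p} K" "\<And>t. t \<in> {w..w' + p} \<Longrightarrow> sgn (f t) = cis (K t)"
    using continuous_lift_exists[OF continuous_on_subset[OF cont] nonzero] by blast
  have K_incr: "N (x + p) - N x = K (x + p) - K x"
    if x: "x \<in> {w..w'}" and N: "continuous_on {x..x + p} N" "\<And>t. t \<in> {x..x + p} \<Longrightarrow> sgn (f t) = cis (N t)"
    for x N
  proof (rule lift_increment_unique[OF N(1)])
    show "continuous_on {x..x + p} K"
      by (rule continuous_on_subset[OF K(1)]) (use x in auto)
    show "cis (N t) = cis (K t)" if "t \<in> {x..x + p}" for t
      using K(2)[of t] x that N(2)[OF that] by auto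
  qed (use \<open>p > 0\<close> in simp)
  have "(\<lambda>t. K (t + p) - K t) w' = (\<lambda>t. K (t + p) - K t) w"
  proof (rule continuous_cis_eq_1_imp_constant[where g = "\<lambda>t. K (t + p) - K t"])
    show "continuous_on {w..w'} (\<lambda>t. K (t + p) - K t)"
      by (intro continuous_intros continuous_on_compose2[OF K(1)] continuous_on_subset[OF K(1)])
         (use \<open>p > 0\<close> in auto)
    fix t assume t: "t \<in> {w..w'}"
    have "cis (K (t + p)) = cis (K t)"
      using K(2)[of t] K(2)[of "t + p"] t \<open>p > 0\<close> periodic[of t] by auto
    then show "cis (K (t + p) - K t) = 1" by (simp add: cis_divide[symmetric])
  qed (simp add: w_def w'_def)
  then have "K (u + p) - K u = K (v + p) - K v"
    by (cases "u \<le> v") (auto simp: w_def w'_def)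
  then show ?thesis
    using K_incr[OF _ L] K_incr[OF _ M] by (simp add: w_def w'_def)
qed

lemma int_eq_0_if_abs_2pi_less: "\<bar>2 * pi * real_of_int k\<bar> < 2 * pi \<Longrightarrow> k = 0"
  by (simp add: abs_mult)

lemma Arg_polar_congruent:
  "\<exists>k::int. t = Arg (complex_of_real (exp r) * cis t) + 2 * pi * of_int k"
proof -
  have "cis (Arg (complex_of_real (exp r) * cis t)) = cis t"
    by (simp add: cis_Arg sgn_of_real_times_cis)
  then show ?thesis using cis_eq_cis_iff by metis
qed

lemma polar_representation:
  assumes "z \<noteq> 0"
  obtains r t where "t \<in> {a..<a + 2*pi}" "z = complex_of_real (exp r) * cis t"
proof -
  define k where "k = \<lfloor>(Arg z - a) / (2 * pi)\<rfloor>"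
  define t where "t = Arg z - 2 * pi * of_int k"
  have "of_int k \<le> (Arg z - a) / (2 * pi)" "(Arg z - a) / (2 * pi) < of_int k + 1"
    unfolding k_def by linarith+
  then have "t \<in> {a..<a + 2*pi}" unfolding t_def by (simp add: field_simps)
  moreover have "cis t = cis (Arg z)"
    using cis_add_2pi_int[of "Arg z" "- k"] by (simp add: t_def)
  then have "z = complex_of_real (exp (ln (cmod z))) * cis t"
    using assms Arg_eq[OF assms] by (simp add: cis_conv_exp)
  ultimately show thesis using that by blast
qed

section \<open>Fixed point index of positively homogeneous maps\<close>

lemma fp_index_eqI:
  assumes "\<And>r. r > 0 \<Longrightarrow> \<exists>L. continuous_on {0..2*pi} L \<and>
     (\<forall>t\<in>{0..2*pi}. sgn (complex_of_real r * cis t - g (complex_of_real r * cis t)) = cis (L t)) \<and>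
     L (2*pi) - L 0 = 2 * pi * of_int d"
  shows "fp_index g 0 = d"
  unfolding fp_index_def
proof (rule the_equality)
  show "\<exists>\<epsilon>>0. \<forall>\<rho>. 0 < \<rho> \<and> \<rho> < \<epsilon> \<longrightarrow>
      (\<exists>L. continuous_on {0..2*pi} L \<and>
           (\<forall>t\<in>{0..2*pi}. sgn (0 + \<rho> * cis t - g (0 + \<rho> * cis t)) = cis (L t)) \<and>
           L (2*pi) - L 0 = 2 * pi * of_int d)"
  proof (intro exI[of _ 1] conjI allI impI)
    fix \<rho> :: complex assume "0 < \<rho> \<and> \<rho> < 1"
    then have "Re \<rho> > 0" "\<rho> = complex_of_real (Re \<rho>)"
      by (auto simp: less_complex_def complex_eq_iff)
    then show "\<exists>L. continuous_on {0..2*pi} L \<and>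
           (\<forall>t\<in>{0..2*pi}. sgn (0 + \<rho> * cis t - g (0 + \<rho> * cis t)) = cis (L t)) \<and>
           L (2*pi) - L 0 = 2 * pi * of_int d"
      using assms by (metis add_0)
  qed (simp add: less_complex_def)
next
  fix d' assume "\<exists>\<epsilon>>0. \<forall>\<rho>. 0 < \<rho> \<and> \<rho> < \<epsilon> \<longrightarrow>
      (\<exists>L. continuous_on {0..2*pi} L \<and>
           (\<forall>t\<in>{0..2*pi}. sgn (0 + \<rho> * cis t - g (0 + \<rho> * cis t)) = cis (L t)) \<and>
           L (2*pi) - L 0 = 2 * pi * of_int d')"
  then obtain \<epsilon> :: complex where "\<epsilon> > 0" and small: "\<And>\<rho>. 0 < \<rho> \<and> \<rho> < \<epsilon> \<Longrightarrow>
      (\<exists>L. continuous_on {0..2*pi} L \<and>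
           (\<forall>t\<in>{0..2*pi}. sgn (0 + \<rho> * cis t - g (0 + \<rho> * cis t)) = cis (L t)) \<and>
           L (2*pi) - L 0 = 2 * pi * of_int d')" by blast
  define r where "r = Re \<epsilon> / 2"
  have r: "r > 0" "0 < complex_of_real r \<and> complex_of_real r < \<epsilon>"
    using \<open>\<epsilon> > 0\<close> by (auto simp: r_def less_complex_def)
  obtain L1 where L1: "continuous_on {0..2*pi} L1"
    "\<forall>t\<in>{0..2*pi}. sgn (complex_of_real r * cis t - g (complex_of_real r * cis t)) = cis (L1 t)"
    "L1 (2*pi) - L1 0 = 2 * pi * of_int d'" using small[OF r(2)] by auto
  obtain L2 where L2: "continuous_on {0..2*pi} L2"
    "\<forall>t\<in>{0..2*pi}. sgn (complex_of_real r * cis t - g (complex_of_real r * cis t)) = cis (L2 t)"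
    "L2 (2*pi) - L2 0 = 2 * pi * of_int d" using assms[OF r(1)] by auto
  have "L1 (2*pi) - L1 0 = L2 (2*pi) - L2 0"
    by (rule lift_increment_unique[OF L1(1) L2(1)]) (use L1(2) L2(2) in auto)
  then show "d' = d" using L1(3) L2(3) by simp
qed

text \<open>On the circle of radius r, x - g x = x (1 - g (cis t) / cis t) for x = r cis t, so the
  index is one (the turn of x) plus the winding number of 1 - g (cis t) / cis t.\<close>
lemma fp_index_positively_homogeneous:
  fixes g :: "complex \<Rightarrow> complex"
  assumes homogeneous: "\<And>r z. r > 0 \<Longrightarrow> g (complex_of_real r * z) = complex_of_real r * g z"
    and no_fixpoint: "\<And>t. g (cis t) \<noteq> cis t"
    and cont: "continuous_on {u..u + 2*pi} (\<lambda>t. 1 - g (cis t) / cis t)"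
    and L: "continuous_on {u..u + 2*pi} L"
      "\<And>t. t \<in> {u..u + 2*pi} \<Longrightarrow> sgn (1 - g (cis t) / cis t) = cis (L t)"
    and winding: "L (u + 2*pi) - L u = 2 * pi * (of_int d - 1)"
  shows "fp_index g 0 = d"
proof (rule fp_index_eqI)
  define W where "W t = 1 - g (cis t) / cis t" for t
  have periodic: "W (t + of_int k * (2*pi)) = W t" for t k
    unfolding W_def by (metis cis_add_2pi_int mult.commute)
  have nonzero: "W t \<noteq> 0" for t
    using no_fixpoint[of t] by (simp add: W_def)
  have "continuous_on UNIV W"
    by (rule continuous_on_period_piecewiseic_extension[OF cont[folded W_def] _ periodic]) simp
  then have "continuous_on {0..2*pi} W" by (rule continuous_on_subset) simp
  then obtain M where M: "continuous_on {0..2*pi} M" "\<And>t. t \<in> {0..2*pi} \<Longrightarrow> sgn (W t) = cis (M t)"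
    using continuous_lift_exists nonzero by metis
  have "M (0 + 2*pi) - M 0 = L (u + 2*pi) - L u"
    by (rule lift_increment_periodic[OF \<open>continuous_on UNIV W\<close> nonzero _ _ _ _ L[folded W_def]])
       (use periodic[of _ 1] M in auto)
  fix r :: real assume "r > 0"
  show "\<exists>L. continuous_on {0..2*pi} L \<and>
     (\<forall>t\<in>{0..2*pi}. sgn (complex_of_real r * cis t - g (complex_of_real r * cis t)) = cis (L t)) \<and>
     L (2*pi) - L 0 = 2 * pi * of_int d"
  proof (intro exI[of _ "\<lambda>t. t + M t"] conjI ballI)
    show "continuous_on {0..2*pi} (\<lambda>t. t + M t)" by (intro continuous_intros M(1))
    show "2 * pi + M (2 * pi) - (0 + M 0) = 2 * pi * of_int d"
      using \<open>M (0 + 2*pi) - M 0 = _\<close> winding by (simp add: algebra_simps)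
    fix t assume t: "t \<in> {0..2*pi}"
    have "complex_of_real r * cis t - g (complex_of_real r * cis t) = complex_of_real r * cis t * W t"
      using homogeneous[OF \<open>r > 0\<close>, of "cis t"] by (simp add: W_def field_simps)
    then show "sgn (complex_of_real r * cis t - g (complex_of_real r * cis t)) = cis (t + M t)"
      using sgn_of_real_times_cis[OF \<open>r > 0\<close>] M(2)[OF t] by (simp add: sgn_mult cis_mult)
  qed
qed

section \<open>Orbits of monotone interval maps\<close>

lemma funpow_in_invariant: "(\<And>x. x \<in> S \<Longrightarrow> h x \<in> S) \<Longrightarrow> s \<in> S \<Longrightarrow> (h ^^ n) s \<in> S"
  by (induction n) auto

lemma funpow_le_self_on:
  fixes h :: "'a::order \<Rightarrow> 'a"
  assumes "\<And>x. x \<in> S \<Longrightarrow> h x \<in> S \<and> h x \<le> x" "s \<in> S"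
  shows "(h ^^ n) s \<in> S \<and> (h ^^ n) s \<le> s"
  by (induction n) (use assms in \<open>auto intro: order_trans\<close>)

lemma funpow_ge_self_on:
  fixes h :: "'a::order \<Rightarrow> 'a"
  assumes "\<And>x. x \<in> S \<Longrightarrow> h x \<in> S \<and> x \<le> h x" "s \<in> S"
  shows "(h ^^ n) s \<in> S \<and> s \<le> (h ^^ n) s"
  by (induction n) (use assms in \<open>auto intro: order_trans\<close>)

text \<open>If h s > s then all later iterates stay above h s, so the orbit never returns to s.\<close>
lemma mono_on_periodic_point_is_fixed:
  fixes h :: "'a::linorder \<Rightarrow> 'a"
  assumes mono: "mono_on S h" and maps: "\<And>x. x \<in> S \<Longrightarrow> h x \<in> S"
    and "s \<in> S" "n \<ge> 1" and periodic: "(h ^^ n) s = s"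
  shows "h s = s"
proof (rule ccontr)
  assume "h s \<noteq> s"
  have orbit: "(h ^^ j) s \<in> S" for j using funpow_in_invariant maps \<open>s \<in> S\<close> by metis
  consider "s < h s" | "h s < s" using \<open>h s \<noteq> s\<close> by fastforce
  then show False
  proof cases
    case 1
    have "h s \<le> (h ^^ j) s" if "j \<ge> 1" for j
      using that
    proof (induction j rule: dec_induct)
      case (step j)
      then show ?case using mono_onD[OF mono \<open>s \<in> S\<close> orbit[of j]] 1 by simp
    qed simp
    then show False using 1 periodic \<open>n \<ge> 1\<close> by fastforce
  next
    case 2
    have "(h ^^ j) s \<le> h s" if "j \<ge> 1" for j
      using that
    proof (induction j rule: dec_induct)
      case (step j)
      then show ?case using mono_onD[OF mono orbit[of j] \<open>s \<in> S\<close>] 2 by simp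
    qed simp
    then show False using 2 periodic \<open>n \<ge> 1\<close> by fastforce
  qed
qed

section \<open>The map F in polar coordinates\<close>

locale Fmap_setting =
  fixes m :: nat and c :: "real \<Rightarrow> real" and a b :: real
  assumes m_ge_1: "m \<ge> 1"
    and c_continuous: "continuous_on {-1..1} c"
    and c_eq_1_iff: "{s \<in> {-1..1}. c s = 1} = {-1, 0, 1}"
    and h_strict_mono: "strict_mono_on {-1..1} (\<lambda>s. s * c s)"
    and a_less_b: "0 < b - a" and b_less: "b - a < 2 * pi"
begin

abbreviation "F \<equiv> Fmap m c a b"
abbreviation "A i \<equiv> sub_pt a b m i"
abbreviation "\<phi> i \<equiv> phi a b m i"
abbreviation "\<phi>inv i \<equiv> phi_inv a b m i"

definition len :: real where "len = (b - a) / real m"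

definition h :: "real \<Rightarrow> real" where "h s = s * c s"

definition piece :: "real \<Rightarrow> nat" where
  "piece t = (SOME i. i \<in> {1..m} \<and> t \<in> {A (i - 1)..A i})"

text \<open>In polar coordinates F (t, r) = (G t, r + D t) for t \<in> [a, a + 2 pi].\<close>
definition G :: "real \<Rightarrow> real" where
  "G t = (if t \<in> {a..b} then \<phi>inv (piece t) (h (\<phi> (piece t) t)) else t)"

definition D :: "real \<Rightarrow> real" where
  "D t = (if t \<in> {a..b} then 1 - 2 * (\<phi> (piece t) t)\<^sup>2 else -1)"

definition Dsum :: "nat \<Rightarrow> real \<Rightarrow> real" where
  "Dsum n t = (\<Sum>j<n. D ((G ^^ j) t))"

definition W :: "nat \<Rightarrow> real \<Rightarrow> complex" where
  "W n t = 1 - (F ^^ n) (cis t) / cis t"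

lemma len_pos: "len > 0"
  using a_less_b m_ge_1 by (simp add: len_def)

lemma len_less_2pi: "len < 2 * pi"
proof -
  have "len \<le> (b - a) / 1"
    unfolding len_def using m_ge_1 a_less_b by (intro divide_left_mono) auto
  then show ?thesis using b_less by simp
qed

lemma A_eq: "A i = a + real i * len"
  unfolding sub_pt_def len_def by simp

lemma A_0: "A 0 = a" and A_m: "A m = b"
  using m_ge_1 by (simp_all add: A_eq len_def)

lemma A_mono: "i \<le> j \<Longrightarrow> A i \<le> A j"
  using len_pos unfolding A_eq by (intro add_left_mono mult_right_mono) auto

lemma A_diff: "i \<ge> 1 \<Longrightarrow> A i - A (i - 1) = len"
  by (simp add: A_eq of_nat_diff algebra_simps)

lemma A_between: "i \<in> {1..m} \<Longrightarrow> a \<le> A (i - 1) \<and> A i \<le> b"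
  using A_mono[of 0 "i - 1"] A_mono[of i m] by (auto simp: A_0 A_m)

lemma b_le: "b \<le> a + 2 * pi"
  using b_less by simp

lemma subdivision_covers: "t \<in> {a..b} \<Longrightarrow> \<exists>i\<in>{1..m}. t \<in> {A (i - 1)..A i}"
proof -
  assume t: "t \<in> {a..b}"
  define q where "q = (t - a) / len"
  have q: "0 \<le> q" "q \<le> real m"
    using t len_pos A_m by (auto simp: q_def A_eq field_simps)
  show ?thesis
  proof (cases "q = 0")
    case True
    then have "t = a" using len_pos by (simp add: q_def)
    then show ?thesis using m_ge_1 A_mono[of 0 1] by (intro bexI[of _ 1]) (auto simp: A_0)
  next
    case False
    define k where "k = nat \<lceil>q\<rceil>"
    have k: "real k = of_int \<lceil>q\<rceil>" using q by (simp add: k_def)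
    have "\<lceil>q\<rceil> \<ge> 1" using q False by simp
    then have "k \<ge> 1" unfolding k_def by linarith
    have "k \<le> m" using q by (simp add: k_def nat_le_iff ceiling_le_iff)
    have "real k - 1 \<le> q" "q \<le> real k" using k by linarith+
    then have "A (k - 1) \<le> t" "t \<le> A k"
      using \<open>k \<ge> 1\<close> len_pos by (auto simp: A_eq q_def of_nat_diff field_simps)
    with \<open>k \<ge> 1\<close> \<open>k \<le> m\<close> show ?thesis by (intro bexI[of _ k]) auto
  qed
qed

lemma phi_eq: "i \<ge> 1 \<Longrightarrow> \<phi> i t = 2 * (t - A (i - 1)) / len - 1"
  unfolding phi_def using A_diff by simp

lemma phi_inv_eq: "i \<ge> 1 \<Longrightarrow> \<phi>inv i s = A (i - 1) + (s + 1) * len / 2"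
  unfolding phi_inv_def using A_diff by simp

lemma phi_inv_phi [simp]: "i \<ge> 1 \<Longrightarrow> \<phi>inv i (\<phi> i t) = t"
  using len_pos by (simp add: phi_eq phi_inv_eq field_simps)

lemma phi_phi_inv [simp]: "i \<ge> 1 \<Longrightarrow> \<phi> i (\<phi>inv i s) = s"
  using len_pos by (simp add: phi_eq phi_inv_eq field_simps)

lemma phi_in: "i \<ge> 1 \<Longrightarrow> t \<in> {A (i - 1)..A i} \<Longrightarrow> \<phi> i t \<in> {-1..1}"
  using len_pos A_diff[of i] by (auto simp: phi_eq field_simps)

lemma phi_inv_in:
  assumes "i \<ge> 1" "s \<in> {-1..1}"
  shows "\<phi>inv i s \<in> {A (i - 1)..A i}"
proof -
  have "0 \<le> (s + 1) * len" "(s + 1) * len \<le> 2 * len"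
    using assms(2) len_pos by (auto intro: mult_nonneg_nonneg mult_right_mono)
  then show ?thesis using A_diff[OF assms(1)] by (auto simp: phi_inv_eq[OF assms(1)])
qed

lemma phi_inv_minus_1: "i \<ge> 1 \<Longrightarrow> \<phi>inv i (-1) = A (i - 1)"
  and phi_inv_1: "i \<ge> 1 \<Longrightarrow> \<phi>inv i 1 = A i"
  using A_diff[of i] by (simp_all add: phi_inv_eq)

lemma c_eq_1: "c (-1) = 1" "c 0 = 1" "c 1 = 1"
  using c_eq_1_iff by (auto simp: set_eq_iff)

lemma h_fixes: "h (-1) = -1" "h 0 = 0" "h 1 = 1"
  by (simp_all add: h_def c_eq_1)

lemma h_mono: "s \<in> {-1..1} \<Longrightarrow> t \<in> {-1..1} \<Longrightarrow> s \<le> t \<Longrightarrow> h s \<le> h t"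
  using strict_mono_on_imp_mono_on[OF h_strict_mono] unfolding h_def mono_on_def by blast

lemma h_in: "s \<in> {-1..1} \<Longrightarrow> h s \<in> {-1..1}"
  using h_mono[of "-1" s] h_mono[of s 1] h_fixes by auto

lemma h_in_nonpos: "s \<in> {-1..0} \<Longrightarrow> h s \<in> {-1..0}"
  and h_in_nonneg: "s \<in> {0..1} \<Longrightarrow> h s \<in> {0..1}"
  using h_mono[of "-1" s] h_mono[of s 0] h_mono[of 0 s] h_mono[of s 1] h_fixes by auto

lemma hpow_in: "s \<in> {-1..1} \<Longrightarrow> (h ^^ n) s \<in> {-1..1}"
  using funpow_in_invariant[of "{-1..1}" h] h_in by blast

lemma h_fixpoint_iff: "s \<in> {-1..1} \<Longrightarrow> h s = s \<longleftrightarrow> s \<in> {-1, 0, 1}"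
  using c_eq_1_iff h_fixes by (auto simp: h_def set_eq_iff)

lemma h_periodic_point_is_fixed: "s \<in> {-1..1} \<Longrightarrow> n \<ge> 1 \<Longrightarrow> (h ^^ n) s = s \<Longrightarrow> h s = s"
  by (rule mono_on_periodic_point_is_fixed[of "{-1..1}"])
     (use h_mono h_in in \<open>auto simp: mono_on_def\<close>)

lemma hpow_displacement_expanding:
  assumes "\<forall>s\<in>{-1..1}. c s \<ge> 1"
  shows "s \<in> {-1..0} \<Longrightarrow> (h ^^ n) s - s \<in> {-1..0}"
    and "s \<in> {0..1} \<Longrightarrow> (h ^^ n) s - s \<in> {0..1}"
proof -
  have "h x \<le> x" if "x \<in> {-1..0}" for x
    using mult_left_mono_neg[of 1 "c x" x] assms that by (auto simp: h_def)
  then show "s \<in> {-1..0} \<Longrightarrow> (h ^^ n) s - s \<in> {-1..0}"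
    using funpow_le_self_on[of "{-1..0}" h s n] h_in_nonpos by auto
  have "x \<le> h x" if "x \<in> {0..1}" for x
    using mult_left_mono[of 1 "c x" x] assms that by (auto simp: h_def)
  then show "s \<in> {0..1} \<Longrightarrow> (h ^^ n) s - s \<in> {0..1}"
    using funpow_ge_self_on[of "{0..1}" h s n] h_in_nonneg by auto
qed

lemma hpow_displacement_contracting:
  assumes "\<forall>s\<in>{-1..1}. c s \<le> 1"
  shows "s \<in> {-1..0} \<Longrightarrow> (h ^^ n) s - s \<in> {0..1}"
    and "s \<in> {0..1} \<Longrightarrow> (h ^^ n) s - s \<in> {-1..0}"
proof -
  have "x \<le> h x" if "x \<in> {-1..0}" for x
    using mult_left_mono_neg[of "c x" 1 x] assms that by (auto simp: h_def)
  then show "s \<in> {-1..0} \<Longrightarrow> (h ^^ n) s - s \<in> {0..1}"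
    using funpow_ge_self_on[of "{-1..0}" h s n] h_in_nonpos by auto
  have "h x \<le> x" if "x \<in> {0..1}" for x
    using mult_left_mono[of "c x" 1 x] assms that by (auto simp: h_def)
  then show "s \<in> {0..1} \<Longrightarrow> (h ^^ n) s - s \<in> {-1..0}"
    using funpow_le_self_on[of "{0..1}" h s n] h_in_nonneg by auto
qed

lemma piece_spec: "t \<in> {a..b} \<Longrightarrow> piece t \<in> {1..m} \<and> t \<in> {A (piece t - 1)..A (piece t)}"
  unfolding piece_def by (rule someI_ex) (use subdivision_covers in blast)

lemma shared_endpoint:
  assumes "i < j" "t \<in> {A (i - 1)..A i}" "t \<in> {A (j - 1)..A j}" "i \<ge> 1"
  shows "\<phi> i t = 1" "\<phi> j t = -1"
proof -
  have "A i \<le> A (j - 1)" using assms(1) by (intro A_mono) auto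
  then have "t = A i" "t = A (j - 1)" using assms by auto
  then show "\<phi> i t = 1" "\<phi> j t = -1"
    using assms A_diff[of i] len_pos by (simp_all add: phi_eq)
qed

text \<open>Where two subintervals meet, both branches of the definition of Fmap agree, so the
  choice made by SOME is irrelevant.\<close>
lemma pieces_agree:
  assumes "i \<in> {1..m}" "j \<in> {1..m}" "t \<in> {A (i - 1)..A i}" "t \<in> {A (j - 1)..A j}"
  shows "\<phi>inv i (h (\<phi> i t)) = \<phi>inv j (h (\<phi> j t)) \<and> (\<phi> i t)\<^sup>2 = (\<phi> j t)\<^sup>2"
proof -
  have endpoint: "\<phi>inv k (h (\<phi> k t)) = t \<and> (\<phi> k t)\<^sup>2 = 1" if "k \<ge> 1" "\<phi> k t \<in> {-1, 1}" for k
  proof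
    have "h (\<phi> k t) = \<phi> k t" using that(2) h_fixes by auto
    then show "\<phi>inv k (h (\<phi> k t)) = t" using that(1) by simp
    show "(\<phi> k t)\<^sup>2 = 1" using that(2) by auto
  qed
  show ?thesis
  proof (cases i j rule: linorder_cases)
    case less
    then show ?thesis using shared_endpoint[OF less assms(3,4)] assms endpoint[of i] endpoint[of j] by simp
  next
    case greater
    then show ?thesis using shared_endpoint[OF greater assms(4,3)] assms endpoint[of i] endpoint[of j] by simp
  qed simp
qed

lemma piece_subset: "i \<in> {1..m} \<Longrightarrow> t \<in> {A (i - 1)..A i} \<Longrightarrow> t \<in> {a..b}"
  using A_between[of i] by auto

lemma G_on_piece: "i \<in> {1..m} \<Longrightarrow> t \<in> {A (i - 1)..A i} \<Longrightarrow> G t = \<phi>inv i (h (\<phi> i t))"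
  and D_on_piece: "i \<in> {1..m} \<Longrightarrow> t \<in> {A (i - 1)..A i} \<Longrightarrow> D t = 1 - 2 * (\<phi> i t)\<^sup>2"
  using pieces_agree[of "piece t" i t] piece_spec[of t] piece_subset[of i t]
  by (auto simp: G_def D_def)

lemma G_outside: "t \<in> {b..a + 2*pi} \<Longrightarrow> G t = t"
  and D_outside: "t \<in> {b..a + 2*pi} \<Longrightarrow> D t = -1"
proof -
  assume t: "t \<in> {b..a + 2*pi}"
  have b: "b \<in> {A (m - 1)..A m}" using A_m A_mono[of "m - 1" m] by simp
  have "\<phi> m b = 1" using m_ge_1 A_m A_diff[of m] len_pos by (simp add: phi_eq)
  then have "G b = b \<and> D b = -1"
    using G_on_piece[OF _ b] D_on_piece[OF _ b] m_ge_1 A_m h_fixes phi_inv_1[of m] by simp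
  then show "G t = t" "D t = -1"
    using t by (cases "t = b"; simp add: G_def D_def)+
qed

lemma G_in: "t \<in> {a..a + 2*pi} \<Longrightarrow> G t \<in> {a..a + 2*pi}"
proof (cases "t \<le> b")
  case True
  assume "t \<in> {a..a + 2*pi}"
  with True obtain i where i: "i \<in> {1..m}" "t \<in> {A (i - 1)..A i}"
    using subdivision_covers by fastforce
  then have "G t \<in> {A (i - 1)..A i}"
    using G_on_piece phi_inv_in phi_in h_in by simp
  then show ?thesis using A_between[OF i(1)] b_le by auto
qed (simp add: G_outside)

lemma Gpow_in: "t \<in> {a..a + 2*pi} \<Longrightarrow> (G ^^ n) t \<in> {a..a + 2*pi}"
  using funpow_in_invariant[of "{a..a + 2*pi}" G] G_in by blast

lemma Gpow_on_piece:
  assumes i: "i \<in> {1..m}" and t: "t \<in> {A (i - 1)..A i}"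
  shows "(G ^^ n) t = \<phi>inv i ((h ^^ n) (\<phi> i t))"
proof (induction n)
  case (Suc n)
  have "\<phi>inv i ((h ^^ n) (\<phi> i t)) \<in> {A (i - 1)..A i}"
    using i t by (intro phi_inv_in hpow_in phi_in) auto
  then show ?case using Suc G_on_piece[OF i] i by simp
qed (use i in simp)

lemma Gpow_outside: "t \<in> {b..a + 2*pi} \<Longrightarrow> (G ^^ n) t = t"
  by (induction n) (auto simp: G_outside)

lemma Dsum_on_piece:
  assumes i: "i \<in> {1..m}" and t: "t \<in> {A (i - 1)..A i}"
  shows "Dsum n t = (\<Sum>j<n. 1 - 2 * ((h ^^ j) (\<phi> i t))\<^sup>2)"
  unfolding Dsum_def
proof (rule sum.cong[OF refl])
  fix j
  have "\<phi>inv i ((h ^^ j) (\<phi> i t)) \<in> {A (i - 1)..A i}"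
    using i t by (intro phi_inv_in hpow_in phi_in) auto
  then show "D ((G ^^ j) t) = 1 - 2 * ((h ^^ j) (\<phi> i t))\<^sup>2"
    using Gpow_on_piece[OF i t] D_on_piece[OF i] i by simp
qed

lemma Dsum_outside: "t \<in> {b..a + 2*pi} \<Longrightarrow> Dsum n t = - real n"
  by (simp add: Dsum_def Gpow_outside D_outside)

lemma ang_rep_polar: "t \<in> {a..b} \<Longrightarrow> ang_rep a b (complex_of_real (exp r) * cis t) = t"
  unfolding ang_rep_def
proof (rule the_equality)
  let ?z = "complex_of_real (exp r) * cis t"
  assume t: "t \<in> {a..b}"
  obtain k :: int where k: "t = Arg ?z + 2 * pi * of_int k"
    using Arg_polar_congruent by blast
  then show "t \<in> {a..b} \<and> (\<exists>k::int. t = Arg ?z + 2 * pi * of_int k)" using t by blast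
  fix t' assume "t' \<in> {a..b} \<and> (\<exists>k::int. t' = Arg ?z + 2 * pi * of_int k)"
  then obtain k' :: int where t': "t' \<in> {a..b}" "t' = Arg ?z + 2 * pi * of_int k'" by blast
  have "t' - t = 2 * pi * of_int (k' - k)" using k t'(2) by (simp add: algebra_simps)
  moreover have "\<bar>t' - t\<bar> < 2 * pi" using t t'(1) b_less by auto
  ultimately have "k' - k = 0" using int_eq_0_if_abs_2pi_less by metis
  then show "t' = t" using k t'(2) by simp
qed

lemma Fmap_polar_inside:
  assumes t: "t \<in> {a..b}"
  shows "F (complex_of_real (exp r) * cis t) = complex_of_real (exp (r + D t)) * cis (G t)"
proof -
  let ?z = "complex_of_real (exp r) * cis t"
  have "\<exists>t'\<in>{a..b}. \<exists>k::int. t' = Arg ?z + 2 * pi * of_int k"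
    using t Arg_polar_congruent by blast
  moreover have "?z \<noteq> 0" by simp
  ultimately have "F ?z = polar (\<phi>inv (piece t) (\<phi> (piece t) t * c (\<phi> (piece t) t)))
      (ln (cmod ?z) + 1 - 2 * (\<phi> (piece t) t)\<^sup>2)"
    unfolding Fmap_def Let_def ang_rep_polar[OF t] piece_def[symmetric] by (simp only: if_False if_True)
  also have "cmod ?z = exp r" by (simp add: norm_mult)
  finally show ?thesis
    unfolding G_def D_def h_def polar_def using t by (simp add: algebra_simps)
qed

lemma Fmap_polar_outside:
  assumes t: "t \<in> {b<..<a + 2*pi}"
  shows "F (complex_of_real (exp r) * cis t) = complex_of_real (exp (r - 1)) * cis t"
proof -
  let ?z = "complex_of_real (exp r) * cis t"
  obtain k :: int where k: "t = Arg ?z + 2 * pi * of_int k"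
    using Arg_polar_congruent by blast
  have "\<not> (\<exists>t'\<in>{a..b}. \<exists>k::int. t' = Arg ?z + 2 * pi * of_int k)"
  proof
    assume "\<exists>t'\<in>{a..b}. \<exists>k::int. t' = Arg ?z + 2 * pi * of_int k"
    then obtain t' and k' :: int where t': "t' \<in> {a..b}" "t' = Arg ?z + 2 * pi * of_int k'" by blast
    have "t' - t = 2 * pi * of_int (k' - k)" using k t'(2) by (simp add: algebra_simps)
    moreover have "\<bar>t' - t\<bar> < 2 * pi" using t t'(1) by auto
    ultimately have "k' - k = 0" using int_eq_0_if_abs_2pi_less by metis
    then show False using k t t' by simp
  qed
  moreover have "?z \<noteq> 0" by simp
  ultimately have "F ?z = polar (Arg ?z) (ln (cmod ?z) - 1)"
    unfolding Fmap_def by (simp only: if_False if_True)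
  moreover have "cmod ?z = exp r" by (simp add: norm_mult)
  moreover have "cis (Arg ?z) = cis t" by (simp add: cis_Arg sgn_of_real_times_cis)
  ultimately show ?thesis by (simp add: polar_def)
qed

lemma Fmap_polar:
  assumes t: "t \<in> {a..a + 2*pi}"
  shows "F (complex_of_real (exp r) * cis t) = complex_of_real (exp (r + D t)) * cis (G t)"
proof -
  consider "t \<in> {a..b}" | "t \<in> {b<..<a + 2*pi}" | "t = a + 2 * pi"
    using t by fastforce
  then show ?thesis
  proof cases
    case 3
    have "cis t = cis a" using 3 cis_add_2pi_int[of a 1] by simp
    moreover have "G a = a" "D a = -1"
      using G_on_piece[of 1 a] D_on_piece[of 1 a] m_ge_1 A_0 A_mono[of 0 1] h_fixes
        phi_inv_minus_1[of 1] by (simp_all add: phi_eq)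
    ultimately show ?thesis
      using Fmap_polar_inside[of a] a_less_b 3 b_le G_outside D_outside by simp
  qed (simp_all add: Fmap_polar_inside Fmap_polar_outside G_outside D_outside)
qed

lemma Fpow_polar:
  assumes t: "t \<in> {a..a + 2*pi}"
  shows "(F ^^ n) (complex_of_real (exp r) * cis t) =
    complex_of_real (exp (r + Dsum n t)) * cis ((G ^^ n) t)"
proof (induction n)
  case (Suc n)
  then show ?case
    using Fmap_polar[OF Gpow_in[OF t, of n], of "r + Dsum n t"]
    by (simp add: Dsum_def add.assoc)
qed (simp add: Dsum_def)

lemma Fpow_0: "(F ^^ n) 0 = 0"
  by (induction n) (auto simp: Fmap_def)

lemma Fpow_homogeneous:
  assumes "r > 0"
  shows "(F ^^ n) (complex_of_real r * z) = complex_of_real r * (F ^^ n) z"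
proof (cases "z = 0")
  case True
  then show ?thesis by (simp add: Fpow_0)
next
  case False
  then obtain r0 t where t: "t \<in> {a..<a + 2*pi}" and z: "z = complex_of_real (exp r0) * cis t"
    by (rule polar_representation)
  have t': "t \<in> {a..a + 2*pi}" using t by simp
  have "complex_of_real r * z = complex_of_real (exp (ln r + r0)) * cis t"
    using assms z by (simp add: exp_add)
  then have "(F ^^ n) (complex_of_real r * z) = complex_of_real (exp (ln r + r0 + Dsum n t)) * cis ((G ^^ n) t)"
    using Fpow_polar[OF t'] by simp
  also have "\<dots> = complex_of_real r * (complex_of_real (exp (r0 + Dsum n t)) * cis ((G ^^ n) t))"
    using assms by (simp add: exp_add)
  also have "\<dots> = complex_of_real r * (F ^^ n) z"
    using Fpow_polar[OF t'] z by simp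
  finally show ?thesis .
qed

lemma Gpow_rotation_free_on_piece:
  assumes i: "i \<in> {1..m}" and t: "t \<in> {A (i - 1)..A i}" and "cis ((G ^^ n) t) = cis t"
  shows "(h ^^ n) (\<phi> i t) = \<phi> i t"
proof -
  have Gn: "(G ^^ n) t = \<phi>inv i ((h ^^ n) (\<phi> i t))" using Gpow_on_piece[OF i t] .
  have "\<phi>inv i ((h ^^ n) (\<phi> i t)) \<in> {A (i - 1)..A i}"
    using i t by (intro phi_inv_in hpow_in phi_in) auto
  then have "(G ^^ n) t \<in> {a..b}" "t \<in> {a..b}"
    using Gn A_between[OF i] t by auto
  moreover obtain k :: int where k: "(G ^^ n) t = t + 2 * pi * of_int k"
    using assms(3) cis_eq_cis_iff by blast
  ultimately have "\<bar>2 * pi * real_of_int k\<bar> < 2 * pi" using b_less by auto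
  then have "(G ^^ n) t = t" using k int_eq_0_if_abs_2pi_less by force
  then show ?thesis using Gn i phi_phi_inv[of i "(h ^^ n) (\<phi> i t)"] by simp
qed

text \<open>A fixed point off the origin would need Dsum n t = 0 and G^n t = t mod 2 pi; inside [a,b]
  this forces a fixed point s \<in> {-1,0,1} of h, where D is the nonzero constant 1 - 2 s^2, and
  outside [a,b] D = -1.\<close>
lemma Fpow_no_fixpoint:
  assumes "z \<noteq> 0" "n \<ge> 1"
  shows "(F ^^ n) z \<noteq> z"
proof
  assume fixed: "(F ^^ n) z = z"
  obtain r t where t: "t \<in> {a..<a + 2*pi}" and z: "z = complex_of_real (exp r) * cis t"
    using polar_representation[OF assms(1)] by blast
  have eq: "complex_of_real (exp (r + Dsum n t)) * cis ((G ^^ n) t) = complex_of_real (exp r) * cis t"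
    using fixed Fpow_polar[of t n r] t z by (simp del: exp_add)
  have Dsum0: "Dsum n t = 0"
    using arg_cong[OF eq, of norm] by (simp add: norm_mult)
  show False
  proof (cases "t \<le> b")
    case True
    with t obtain i where i: "i \<in> {1..m}" "t \<in> {A (i - 1)..A i}"
      using subdivision_covers by fastforce
    define s where "s = \<phi> i t"
    have s: "s \<in> {-1..1}" using phi_in i by (simp add: s_def)
    have "(h ^^ n) s = s"
      using Gpow_rotation_free_on_piece[OF i] eq Dsum0 by (simp add: s_def)
    then have "h s = s" using h_periodic_point_is_fixed[OF s assms(2)] by blast
    then have "s \<in> {-1, 0, 1}" "(h ^^ j) s = s" for j
      using h_fixpoint_iff[OF s] funpow_in_invariant[of "{s}" h] by auto
    then have "Dsum n t = real n * (1 - 2 * s\<^sup>2)"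
      using Dsum_on_piece[OF i] by (simp add: s_def)
    then show False using Dsum0 \<open>s \<in> {-1, 0, 1}\<close> assms(2) by auto
  next
    case False
    then show False using Dsum0 Dsum_outside[of t n] t assms(2) by simp
  qed
qed

lemma Fpow_isolated_fixpoint:
  assumes "n \<ge> 1"
  shows "isolated_fixpoint (F ^^ n) 0"
  unfolding isolated_fixpoint_def
proof (intro conjI exI[of _ 1] allI impI)
  fix x :: complex assume "0 < dist x 0 \<and> dist x 0 < 1"
  then show "(F ^^ n) x \<noteq> x" using Fpow_no_fixpoint[OF _ assms] by auto
qed (simp_all add: Fpow_0)

section \<open>Winding of the displacement direction\<close>

lemma W_polar:
  "t \<in> {a..a + 2*pi} \<Longrightarrow> W n t = 1 - complex_of_real (exp (Dsum n t)) * cis ((G ^^ n) t - t)"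
  using Fpow_polar[of t n 0] by (simp add: W_def cis_divide[symmetric])

lemma W_nonzero: "n \<ge> 1 \<Longrightarrow> W n t \<noteq> 0"
  using Fpow_no_fixpoint[of "cis t" n] by (simp add: W_def)

lemma phi_continuous: "i \<ge> 1 \<Longrightarrow> continuous_on S (\<phi> i)"
  unfolding phi_def by (intro continuous_intros) (use A_diff len_pos in auto)

lemma continuous_on_period_piecewise:
  assumes "continuous_on {b..a + 2*pi} f"
    and "\<And>i. i \<in> {1..m} \<Longrightarrow> continuous_on {A (i - 1)..A i} f"
  shows "continuous_on {a..a + 2*pi} f"
proof -
  have "{a..a + 2*pi} = {b..a + 2*pi} \<union> (\<Union>i\<in>{1..m}. {A (i - 1)..A i})"
  proof (intro equalityI subsetI)
    fix t assume "t \<in> {a..a + 2*pi}"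
    then show "t \<in> {b..a + 2*pi} \<union> (\<Union>i\<in>{1..m}. {A (i - 1)..A i})"
      using subdivision_covers[of t] by (cases "t \<le> b") auto
  qed (use A_between a_less_b b_le in fastforce)
  moreover have "continuous_on ({b..a + 2*pi} \<union> (\<Union>i\<in>{1..m}. {A (i - 1)..A i})) f"
    by (intro continuous_on_closed_Un continuous_on_closed_Union assms) auto
  ultimately show ?thesis by simp
qed

lemma G_continuous: "continuous_on {a..a + 2*pi} G"
proof (rule continuous_on_period_piecewise)
  show "continuous_on {b..a + 2*pi} G"
    by (rule continuous_on_cong[THEN iffD2, OF refl _ continuous_on_id]) (simp add: G_outside)
  fix i assume i: "i \<in> {1..m}"
  have "continuous_on {A (i - 1)..A i} (\<lambda>t. c (\<phi> i t))"
    by (rule continuous_on_compose2[OF c_continuous phi_continuous]) (use phi_in i in auto)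
  then have "continuous_on {A (i - 1)..A i} (\<lambda>t. \<phi>inv i (h (\<phi> i t)))"
    unfolding phi_inv_def h_def by (intro continuous_intros phi_continuous) (use i in auto)
  then show "continuous_on {A (i - 1)..A i} G"
    by (rule continuous_on_cong[THEN iffD2, OF refl, rotated]) (simp add: G_on_piece[OF i])
qed

lemma D_continuous: "continuous_on {a..a + 2*pi} D"
proof (rule continuous_on_period_piecewise)
  show "continuous_on {b..a + 2*pi} D"
    by (rule continuous_on_cong[THEN iffD2, OF refl _ continuous_on_const[of _ "-1"]])
       (simp add: D_outside)
  fix i assume i: "i \<in> {1..m}"
  have "continuous_on {A (i - 1)..A i} (\<lambda>t. 1 - 2 * (\<phi> i t)\<^sup>2)"
    by (intro continuous_intros phi_continuous) (use i in auto)
  then show "continuous_on {A (i - 1)..A i} D"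
    by (rule continuous_on_cong[THEN iffD2, OF refl, rotated]) (simp add: D_on_piece[OF i])
qed

lemma Gpow_continuous: "continuous_on {a..a + 2*pi} (G ^^ n)"
proof (induction n)
  case (Suc n)
  have "continuous_on {a..a + 2*pi} (\<lambda>t. G ((G ^^ n) t))"
    by (rule continuous_on_compose2[OF G_continuous Suc]) (use Gpow_in in auto)
  then show ?case by (simp add: o_def)
qed (simp add: continuous_on_id)

lemma W_continuous: "continuous_on {a..a + 2*pi} (W n)"
proof -
  have "continuous_on {a..a + 2*pi} (\<lambda>t. D ((G ^^ j) t))" for j
    by (rule continuous_on_compose2[OF D_continuous Gpow_continuous]) (use Gpow_in in auto)
  then have "continuous_on {a..a + 2*pi} (Dsum n)"
    unfolding Dsum_def by (intro continuous_on_sum) auto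
  then have "continuous_on {a..a + 2*pi} (\<lambda>t. 1 - complex_of_real (exp (Dsum n t)) * cis ((G ^^ n) t - t))"
    by (intro continuous_intros Gpow_continuous)
  then show ?thesis
    by (rule continuous_on_cong[THEN iffD2, OF refl, rotated]) (simp add: W_polar)
qed

lemma W_on_piece:
  assumes i: "i \<in> {1..m}" and t: "t \<in> {A (i - 1)..A i}"
  shows "W n t = 1 - complex_of_real (exp (\<Sum>j<n. 1 - 2 * ((h ^^ j) (\<phi> i t))\<^sup>2)) *
           cis (((h ^^ n) (\<phi> i t) - \<phi> i t) * len / 2)"
proof -
  have "(G ^^ n) t - t = \<phi>inv i ((h ^^ n) (\<phi> i t)) - \<phi>inv i (\<phi> i t)"
    using Gpow_on_piece[OF i t] i by simp
  also have "\<dots> = ((h ^^ n) (\<phi> i t) - \<phi> i t) * len / 2"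
    using i by (simp add: phi_inv_eq field_simps)
  finally have rotation: "(G ^^ n) t - t = ((h ^^ n) (\<phi> i t) - \<phi> i t) * len / 2" .
  have "t \<in> {a..a + 2*pi}" using piece_subset[OF i t] b_le by auto
  show ?thesis unfolding W_polar[OF \<open>t \<in> {a..a + 2*pi}\<close>] Dsum_on_piece[OF i t] rotation ..
qed

lemma W_at_h_fixpoint:
  assumes i: "i \<in> {1..m}" and t: "t \<in> {A (i - 1)..A i}" and fixed: "h (\<phi> i t) = \<phi> i t"
  shows "W n t = complex_of_real (1 - exp (real n * (1 - 2 * (\<phi> i t)\<^sup>2)))"
  using W_on_piece[OF i t, of n] funpow_in_invariant[of "{\<phi> i t}" h] fixed by simp

lemma W_at_endpoints:
  assumes "i \<in> {1..m}"
  shows "W n (A (i - 1)) = complex_of_real (1 - exp (- real n))"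
    and "W n (A i) = complex_of_real (1 - exp (- real n))"
proof -
  have "A (i - 1) \<in> {A (i - 1)..A i}" "A i \<in> {A (i - 1)..A i}"
    using A_mono[of "i - 1" i] by auto
  moreover have "\<phi> i (A (i - 1)) = -1" "\<phi> i (A i) = 1"
    using assms A_diff[of i] len_pos by (simp_all add: phi_eq)
  ultimately show "W n (A (i - 1)) = complex_of_real (1 - exp (- real n))"
    and "W n (A i) = complex_of_real (1 - exp (- real n))"
    using W_at_h_fixpoint[OF assms] h_fixes by simp_all
qed

lemma W_at_midpoint:
  "i \<in> {1..m} \<Longrightarrow> W n (\<phi>inv i 0) = complex_of_real (1 - exp (real n))"
  using W_at_h_fixpoint[of i "\<phi>inv i 0" n] phi_inv_in[of i 0] h_fixes by simp

lemma W_outside: "t \<in> {b..a + 2*pi} \<Longrightarrow> W n t = complex_of_real (1 - exp (- real n))"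
  using W_polar[of t n] Dsum_outside[of t n] Gpow_outside[of t n] a_less_b by simp

text \<open>The rotation angle lies in [-len/2, len/2] \<subseteq> (-pi, pi), so the sign of Im W is
  opposite to the sign of the displacement of h^n.\<close>
lemma Im_W_nonneg:
  assumes i: "i \<in> {1..m}" and t: "t \<in> {A (i - 1)..A i}"
    and displacement: "(h ^^ n) (\<phi> i t) - \<phi> i t \<in> {-1..0}"
  shows "Im (W n t) \<ge> 0"
proof -
  define x where "x = ((h ^^ n) (\<phi> i t) - \<phi> i t) * len / 2"
  have "- x \<le> len / 2" "0 \<le> - x"
    using displacement len_pos mult_right_mono[of "\<phi> i t - (h ^^ n) (\<phi> i t)" 1 len]
    by (auto simp: x_def field_simps)
  then have "sin x \<le> 0" using sin_ge_zero[of "- x"] len_less_2pi by simp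
  then show ?thesis using W_on_piece[OF i t, of n] by (simp add: x_def mult_nonneg_nonpos)
qed

lemma Im_W_nonpos:
  assumes i: "i \<in> {1..m}" and t: "t \<in> {A (i - 1)..A i}"
    and displacement: "(h ^^ n) (\<phi> i t) - \<phi> i t \<in> {0..1}"
  shows "Im (W n t) \<le> 0"
proof -
  define x where "x = ((h ^^ n) (\<phi> i t) - \<phi> i t) * len / 2"
  have "x \<le> len / 2" "0 \<le> x"
    using displacement len_pos mult_right_mono[of "(h ^^ n) (\<phi> i t) - \<phi> i t" 1 len]
    by (auto simp: x_def field_simps)
  then have "sin x \<ge> 0" using sin_ge_zero[of x] len_less_2pi by simp
  then show ?thesis using W_on_piece[OF i t, of n] by (simp add: x_def)
qed

lemma phi_on_left_half:
  "i \<in> {1..m} \<Longrightarrow> t \<in> {A (i - 1)..\<phi>inv i 0} \<Longrightarrow> t \<in> {A (i - 1)..A i} \<and> \<phi> i t \<in> {-1..0}"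
  using phi_inv_in[of i 0] phi_in[of i t] len_pos by (auto simp: phi_eq phi_inv_eq field_simps)

lemma phi_on_right_half:
  "i \<in> {1..m} \<Longrightarrow> t \<in> {\<phi>inv i 0..A i} \<Longrightarrow> t \<in> {A (i - 1)..A i} \<and> \<phi> i t \<in> {0..1}"
  using phi_inv_in[of i 0] phi_in[of i t] len_pos by (auto simp: phi_eq phi_inv_eq field_simps)

definition arg_lift :: "nat \<Rightarrow> (real \<Rightarrow> real) \<Rightarrow> bool" where
  "arg_lift n N \<longleftrightarrow> continuous_on {a..a + 2*pi} N \<and> (\<forall>t\<in>{a..a + 2*pi}. sgn (W n t) = cis (N t))"

lemma arg_lift_restrict:
  assumes "arg_lift n N" "a \<le> u" "v \<le> a + 2*pi"
  shows "continuous_on {u..v} (W n)" "continuous_on {u..v} N"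
    "\<And>t. t \<in> {u..v} \<Longrightarrow> sgn (W n t) = cis (N t)"
  using assms continuous_on_subset[OF W_continuous] continuous_on_subset[of _ N]
  by (auto simp: arg_lift_def)

lemma arg_lift_increment_upper:
  assumes "arg_lift n N" "n \<ge> 1" "a \<le> u" "u \<le> v" "v \<le> a + 2*pi"
    and "\<And>t. t \<in> {u..v} \<Longrightarrow> Im (W n t) \<ge> 0" "W n u \<in> \<real>" "W n v \<in> \<real>"
  shows "N v - N u = Arg (W n v) - Arg (W n u)"
proof (rule lift_increment_upper_half_plane)
  show "continuous_on {u..v} (W n)" "continuous_on {u..v} N"
    "\<And>t. t \<in> {u..v} \<Longrightarrow> sgn (W n t) = cis (N t)"
    by (rule arg_lift_restrict[OF assms(1,3,5)])+
qed (use assms W_nonzero in auto)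

lemma arg_lift_increment_lower:
  assumes "arg_lift n N" "n \<ge> 1" "a \<le> u" "u \<le> v" "v \<le> a + 2*pi"
    and "\<And>t. t \<in> {u..v} \<Longrightarrow> Im (W n t) \<le> 0" "W n u \<in> \<real>" "W n v \<in> \<real>"
  shows "N v - N u = Arg (W n u) - Arg (W n v)"
proof (rule lift_increment_lower_half_plane)
  show "continuous_on {u..v} (W n)" "continuous_on {u..v} N"
    "\<And>t. t \<in> {u..v} \<Longrightarrow> sgn (W n t) = cis (N t)"
    by (rule arg_lift_restrict[OF assms(1,3,5)])+
qed (use assms W_nonzero in auto)

lemma midpoint_bounds:
  "i \<in> {1..m} \<Longrightarrow> a \<le> A (i - 1) \<and> A (i - 1) \<le> \<phi>inv i 0 \<and> \<phi>inv i 0 \<le> A i \<and> A i \<le> a + 2*pi"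
  using A_between[of i] phi_inv_in[of i 0] b_le by auto

lemma winding_piece_expanding:
  assumes "\<forall>s\<in>{-1..1}. c s \<ge> 1" "arg_lift n N" "n \<ge> 1" and i: "i \<in> {1..m}"
  shows "N (A i) - N (A (i - 1)) = 2 * pi"
proof -
  have "N (\<phi>inv i 0) - N (A (i - 1)) = Arg (W n (\<phi>inv i 0)) - Arg (W n (A (i - 1)))"
  proof (rule arg_lift_increment_upper[OF assms(2,3)])
    show "Im (W n t) \<ge> 0" if "t \<in> {A (i - 1)..\<phi>inv i 0}" for t
      using phi_on_left_half[OF i that] hpow_displacement_expanding(1)[OF assms(1)] Im_W_nonneg[OF i]
      by blast
  qed (use midpoint_bounds[OF i] W_at_endpoints[OF i] W_at_midpoint[OF i] in auto)
  moreover have "N (A i) - N (\<phi>inv i 0) = Arg (W n (\<phi>inv i 0)) - Arg (W n (A i))"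
  proof (rule arg_lift_increment_lower[OF assms(2,3)])
    show "Im (W n t) \<le> 0" if "t \<in> {\<phi>inv i 0..A i}" for t
      using phi_on_right_half[OF i that] hpow_displacement_expanding(2)[OF assms(1)] Im_W_nonpos[OF i]
      by blast
  qed (use midpoint_bounds[OF i] W_at_endpoints[OF i] W_at_midpoint[OF i] in auto)
  ultimately show ?thesis
    using W_at_endpoints[OF i] W_at_midpoint[OF i] \<open>n \<ge> 1\<close>
      Arg_of_real[of "1 - exp (real n)"] Arg_of_real[of "1 - exp (- real n)"] by simp
qed

lemma winding_piece_contracting:
  assumes "\<forall>s\<in>{-1..1}. c s \<le> 1" "arg_lift n N" "n \<ge> 1" and i: "i \<in> {1..m}"
  shows "N (A i) - N (A (i - 1)) = - 2 * pi"
proof -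
  have "N (\<phi>inv i 0) - N (A (i - 1)) = Arg (W n (A (i - 1))) - Arg (W n (\<phi>inv i 0))"
  proof (rule arg_lift_increment_lower[OF assms(2,3)])
    show "Im (W n t) \<le> 0" if "t \<in> {A (i - 1)..\<phi>inv i 0}" for t
      using phi_on_left_half[OF i that] hpow_displacement_contracting(1)[OF assms(1)] Im_W_nonpos[OF i]
      by blast
  qed (use midpoint_bounds[OF i] W_at_endpoints[OF i] W_at_midpoint[OF i] in auto)
  moreover have "N (A i) - N (\<phi>inv i 0) = Arg (W n (A i)) - Arg (W n (\<phi>inv i 0))"
  proof (rule arg_lift_increment_upper[OF assms(2,3)])
    show "Im (W n t) \<ge> 0" if "t \<in> {\<phi>inv i 0..A i}" for t
      using phi_on_right_half[OF i that] hpow_displacement_contracting(2)[OF assms(1)] Im_W_nonneg[OF i]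
      by blast
  qed (use midpoint_bounds[OF i] W_at_endpoints[OF i] W_at_midpoint[OF i] in auto)
  ultimately show ?thesis
    using W_at_endpoints[OF i] W_at_midpoint[OF i] \<open>n \<ge> 1\<close>
      Arg_of_real[of "1 - exp (real n)"] Arg_of_real[of "1 - exp (- real n)"] by simp
qed

lemma winding_outside:
  assumes "arg_lift n N" "n \<ge> 1"
  shows "N (a + 2*pi) - N b = 0"
  using arg_lift_increment_upper[OF assms, of b "a + 2*pi"] W_outside[of _ n] a_less_b b_le
  by simp

lemma winding_total:
  assumes "arg_lift n N" "n \<ge> 1"
    and pieces: "\<And>i. i \<in> {1..m} \<Longrightarrow> N (A i) - N (A (i - 1)) = x"
  shows "N (a + 2*pi) - N a = real m * x"
proof -
  have "N (a + 2*pi) - N a = (N (a + 2*pi) - N b) + (N (A m) - N (A 0))"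
    using A_0 A_m by simp
  also have "N (A m) - N (A 0) = (\<Sum>i<m. N (A (Suc i)) - N (A i))"
    by (rule sum_lessThan_telescope[symmetric])
  also have "\<dots> = (\<Sum>i<m. x)"
  proof (rule sum.cong[OF refl])
    fix i assume "i \<in> {..<m}"
    then show "N (A (Suc i)) - N (A i) = x" using pieces[of "Suc i"] by simp
  qed
  finally show ?thesis using winding_outside[OF assms(1,2)] by simp
qed

lemma fp_index_Fpow_eqI:
  assumes "n \<ge> 1" and winding: "\<And>N. arg_lift n N \<Longrightarrow> N (a + 2*pi) - N a = 2 * pi * (of_int d - 1)"
  shows "fp_index (F ^^ n) 0 = d"
proof -
  obtain N where N: "continuous_on {a..a + 2*pi} N" "\<And>t. t \<in> {a..a + 2*pi} \<Longrightarrow> sgn (W n t) = cis (N t)"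
    using continuous_lift_exists[OF W_continuous W_nonzero[OF assms(1)]] by blast
  show ?thesis
  proof (rule fp_index_positively_homogeneous[OF Fpow_homogeneous])
    show "(F ^^ n) (cis t) \<noteq> cis t" for t using Fpow_no_fixpoint[OF _ assms(1)] by simp
    show "continuous_on {a..a + 2*pi} (\<lambda>t. 1 - (F ^^ n) (cis t) / cis t)"
      using W_continuous by (simp add: W_def[abs_def])
    show "sgn (1 - (F ^^ n) (cis t) / cis t) = cis (N t)" if "t \<in> {a..a + 2*pi}" for t
      using N(2)[OF that] by (simp add: W_def)
    show "N (a + 2*pi) - N a = 2 * pi * (of_int d - 1)"
      using winding N by (simp add: arg_lift_def)
  qed (use N in auto)
qed

lemma fp_index_Fpow_expanding:
  assumes "\<forall>s\<in>{-1..1}. c s \<ge> 1" "n \<ge> 1"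
  shows "fp_index (F ^^ n) 0 = 1 + int m"
proof (rule fp_index_Fpow_eqI[OF assms(2)])
  fix N assume "arg_lift n N"
  then show "N (a + 2*pi) - N a = 2 * pi * (of_int (1 + int m) - 1)"
    using winding_total winding_piece_expanding[OF assms(1)] assms(2) by simp
qed

lemma fp_index_Fpow_contracting:
  assumes "\<forall>s\<in>{-1..1}. c s \<le> 1" "n \<ge> 1"
  shows "fp_index (F ^^ n) 0 = 1 - int m"
proof (rule fp_index_Fpow_eqI[OF assms(2)])
  fix N assume "arg_lift n N"
  then show "N (a + 2*pi) - N a = 2 * pi * (of_int (1 - int m) - 1)"
    using winding_total winding_piece_contracting[OF assms(1)] assms(2) by simp
qed

end

theorem mainTheorem4:
  fixes m :: nat and c :: "real \<Rightarrow> real" and a b :: real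
  assumes "m \<ge> 1"
    and "continuous_on {-1..1} c"
    and "{s \<in> {-1..1}. c s = 1} = {-1, 0, 1}"
    and "strict_mono_on {-1..1} (\<lambda>s. s * c s)"
    and "0 < b - a" and "b - a < 2 * pi"
  shows "(\<forall>n\<ge>1. isolated_fixpoint (Fmap m c a b ^^ n) 0)
    \<and> (c ` {-1..1} \<subseteq> {1/2..1} \<longrightarrow>
         (\<forall>n\<ge>1. fp_index (Fmap m c a b ^^ n) 0 = 1 - int m))
    \<and> (c ` {-1..1} \<subseteq> {1..2} \<longrightarrow>
         (\<forall>n\<ge>1. fp_index (Fmap m c a b ^^ n) 0 = 1 + int m))"
proof -
  interpret Fmap_setting m c a b
    using assms by unfold_locales
  show ?thesis
    using Fpow_isolated_fixpoint fp_index_Fpow_contracting fp_index_Fpow_expanding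
    by (auto simp: image_subset_iff)
qed

end
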